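(* On $\mathrm{Stem}_T^2(D,A\otimes\mathbb R^{2^\tau})$ one has $\Delta_T=\partial_T\overline\partial_T=\overline\partial_T\partial_T$.
   Context: $A$ is a finite-dimensional associative real algebra with unit and $*$-involution; $V\subseteq A$ has a basis $(v_0=1,v_1,\dots,v_N)$ with $v_s$ ($s\ge1$) satisfying $v_s^2=-1$ and pairwise anticommuting; $\mathbb R_{0,t_0}=\mathrm{Span}_{\mathbb R}(v_0,\dots,v_{t_0})$. $T=(t_0,\dots,t_\tau)$ with $0\le t_0<\dots<t_\tau=N$. $\mathscr P(\tau)$ is the power set of $\{1,\dots,\tau\}$; $\overline\beta^h$ is $\beta\in\mathbb R^\tau$ with $\beta_h$ replaced by $-\beta_h$. $D\subseteq\mathbb R_{0,t_0}\times\mathbb R^\tau$ is open and invariant under $(\alpha,\beta)\mapsto(\alpha,\overline\beta^h)$. A $T$-stem function is $F=\sum_KE_KF_K:D\to A\otimes\mathbb R^{2^\tau}$ with $F_K(\alpha,\overline\beta^h)=F_K(\alpha,\beta)$ if $h\notin K$ and $=-F_K(\alpha,\beta)$ if $h\in K$; $\mathrm{Stem}^p_T(D,A\otimes\mathbb R^{2^\tau})$ consists of those with $C^p$ components. Writing $\alpha=\sum_{s=0}^{t_0}x_sv_s$, $\partial_{\alpha_s}$, $\partial_{\beta_h}$ are partial derivatives in $x_s$, $\beta_h$; $\overline\partial_\alpha=\partial_{\alpha_0}+\sum_{s=1}^{t_0}v_s\partial_{\alpha_s}$, $\partial_\alpha=\partial_{\alpha_0}-\sum_{s=1}^{t_0}v_s\partial_{\alpha_s}$,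 $\overline\partial^u_\alpha=\partial_{\alpha_0}-(-1)^u\sum_{s=1}^{t_0}v_s\partial_{\alpha_s}$ for $u\in\mathbb N$. $\sigma(h,K)\in\{0,1\}$ is the parity of the number of elements of $K$ that are $\le h$. The operators are: $(\overline\partial_TF)_K=\overline\partial_\alpha^{|K|+1}F_K+\sum_{h=1}^\tau(-1)^{\sigma(h,K)+1}\partial_{\beta_h}F_{K\triangle\{h\}}$, $(\partial_TF)_K=\overline\partial_\alpha^{|K|}F_K+\sum_{h=1}^\tau(-1)^{\sigma(h,K)}\partial_{\beta_h}F_{K\triangle\{h\}}$, $(\Delta_TF)_K=\partial_\alpha\overline\partial_\alpha F_K+\sum_{h=1}^\tau\partial_{\beta_h}^2F_K$; they map $T$-stem functions to $T$-stem functions. *)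

theory Defs
  imports "HOL-Analysis.Analysis"
begin

text \<open>Points of \<open>D \<subseteq> R_{0,t0} \<times> R^tau\<close> are written in coordinates:
  a point is a pair \<open>(x, b)\<close> where \<open>x s\<close> (s = 0..t0) are the real coordinates of
  \<open>alpha = \<Sum>s. x s v_s\<close> and \<open>b h\<close> (h = 1..tau) are the coordinates of beta.\<close>

type_synonym pt = "(nat \<Rightarrow> real) \<times> (nat \<Rightarrow> real)"

definition stem_space :: "nat \<Rightarrow> nat \<Rightarrow> pt set" where
  "stem_space t0 tau = {(x, b). (\<forall>s>t0. x s = 0) \<and> b 0 = 0 \<and> (\<forall>h>tau. b h = 0)}"

datatype coord = CA nat | CB nat

definition coords :: "nat \<Rightarrow> nat \<Rightarrow> coord set" where
  "coords t0 tau = CA ` {0..t0} \<union> CB ` {1..tau}"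

fun getc :: "coord \<Rightarrow> pt \<Rightarrow> real" where
  "getc (CA s) (x, b) = x s"
| "getc (CB h) (x, b) = b h"

fun setc :: "coord \<Rightarrow> pt \<Rightarrow> real \<Rightarrow> pt" where
  "setc (CA s) (x, b) u = (x(s := u), b)"
| "setc (CB h) (x, b) u = (x, b(h := u))"

definition has_pd :: "coord \<Rightarrow> (pt \<Rightarrow> 'a::real_normed_vector) \<Rightarrow> pt \<Rightarrow> bool" where
  "has_pd c f p \<longleftrightarrow> (\<lambda>u. f (setc c p u)) differentiable (at (getc c p))"

definition pd :: "coord \<Rightarrow> (pt \<Rightarrow> 'a::real_normed_vector) \<Rightarrow> pt \<Rightarrow> 'a" where
  "pd c f p = vector_derivative (\<lambda>u. f (setc c p u)) (at (getc c p))"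

definition C2_on :: "nat \<Rightarrow> nat \<Rightarrow> pt set \<Rightarrow> (pt \<Rightarrow> 'a::real_normed_vector) \<Rightarrow> bool" where
  "C2_on t0 tau D f \<longleftrightarrow> continuous_on D f \<and>
     (\<forall>c\<in>coords t0 tau. (\<forall>p\<in>D. has_pd c f p) \<and> continuous_on D (pd c f) \<and>
        (\<forall>c'\<in>coords t0 tau. (\<forall>p\<in>D. has_pd c' (pd c f) p) \<and> continuous_on D (pd c' (pd c f))))"

definition stem2 :: "nat \<Rightarrow> nat \<Rightarrow> pt set \<Rightarrow> (nat set \<Rightarrow> pt \<Rightarrow> 'a::{real_normed_vector,uminus}) \<Rightarrow> bool" where
  "stem2 t0 tau D F \<longleftrightarrow>
     (\<forall>K. K \<subseteq> {1..tau} \<longrightarrow> C2_on t0 tau D (F K) \<and>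
        (\<forall>x b h. (x, b) \<in> D \<longrightarrow> h \<in> {1..tau} \<longrightarrow>
           F K (x, b(h := - b h)) = (if h \<in> K then - F K (x, b) else F K (x, b))))"

definition sgm :: "nat \<Rightarrow> nat set \<Rightarrow> nat" where
  "sgm h K = card {k \<in> K. k \<le> h} mod 2"

definition symd1 :: "nat set \<Rightarrow> nat \<Rightarrow> nat set" where
  "symd1 K h = (if h \<in> K then K - {h} else insert h K)"

definition dbaru :: "(nat \<Rightarrow> 'a::{real_normed_algebra_1}) \<Rightarrow> nat \<Rightarrow> nat \<Rightarrow> (pt \<Rightarrow> 'a) \<Rightarrow> pt \<Rightarrow> 'a" where
  "dbaru v t0 u f p = pd (CA 0) f p - ((-1::real) ^ u) *\<^sub>R (\<Sum>s=1..t0. v s * pd (CA s) f p)"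

definition dbarA :: "(nat \<Rightarrow> 'a::{real_normed_algebra_1}) \<Rightarrow> nat \<Rightarrow> (pt \<Rightarrow> 'a) \<Rightarrow> pt \<Rightarrow> 'a" where
  "dbarA v t0 f p = pd (CA 0) f p + (\<Sum>s=1..t0. v s * pd (CA s) f p)"

definition dA :: "(nat \<Rightarrow> 'a::{real_normed_algebra_1}) \<Rightarrow> nat \<Rightarrow> (pt \<Rightarrow> 'a) \<Rightarrow> pt \<Rightarrow> 'a" where
  "dA v t0 f p = pd (CA 0) f p - (\<Sum>s=1..t0. v s * pd (CA s) f p)"

definition dbarT :: "(nat \<Rightarrow> 'a::{real_normed_algebra_1}) \<Rightarrow> nat \<Rightarrow> nat \<Rightarrow>
    (nat set \<Rightarrow> pt \<Rightarrow> 'a) \<Rightarrow> nat set \<Rightarrow> pt \<Rightarrow> 'a" where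
  "dbarT v t0 tau F K p = dbaru v t0 (card K + 1) (F K) p +
     (\<Sum>h=1..tau. ((-1::real) ^ (sgm h K + 1)) *\<^sub>R pd (CB h) (F (symd1 K h)) p)"

definition dT :: "(nat \<Rightarrow> 'a::{real_normed_algebra_1}) \<Rightarrow> nat \<Rightarrow> nat \<Rightarrow>
    (nat set \<Rightarrow> pt \<Rightarrow> 'a) \<Rightarrow> nat set \<Rightarrow> pt \<Rightarrow> 'a" where
  "dT v t0 tau F K p = dbaru v t0 (card K) (F K) p +
     (\<Sum>h=1..tau. ((-1::real) ^ (sgm h K)) *\<^sub>R pd (CB h) (F (symd1 K h)) p)"

definition LapT :: "(nat \<Rightarrow> 'a::{real_normed_algebra_1}) \<Rightarrow> nat \<Rightarrow> nat \<Rightarrow>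
    (nat set \<Rightarrow> pt \<Rightarrow> 'a) \<Rightarrow> nat set \<Rightarrow> pt \<Rightarrow> 'a" where
  "LapT v t0 tau F K p = dA v t0 (dbarA v t0 (F K)) p +
     (\<Sum>h=1..tau. pd (CB h) (pd (CB h) (F K)) p)"

end

theory Submission
  imports Defs
begin

text \<open>At a point \<open>p\<close>, \<open>\<Delta>\<^sub>T F\<close> and both composites are linear combinations of the second
  partial derivatives \<open>\<partial>\<^sub>c \<partial>\<^sub>c\<^sub>' F\<^sub>L(p)\<close>, so the claim is an algebraic identity that only uses
  their symmetry (Schwarz's theorem). In a composite, the \<open>\<alpha>\<alpha>\<close>-block is \<open>dA (dbarA F\<^sub>K)\<close> because
  the two exponents \<open>|K| + u\<close> have opposite parity; the \<open>\<alpha>\<beta>\<close>-terms cancel because \<open>|symd1 K h|\<close>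
  and \<open>|K|\<close> have opposite parity, and so have the \<open>\<beta>\<close>-signs of \<open>dT\<close> and \<open>dbarT\<close>; in the
  \<open>\<beta>\<beta>\<close>-block the sign \<open>(-1)\<^bsup>\<sigma>(h, K) + \<sigma>(j, symd1 K h)\<^esup>\<close> is antisymmetric in \<open>h \<noteq> j\<close> and
  equals \<open>-1\<close> for \<open>h = j\<close>, which leaves \<open>\<Sum>\<^sub>h \<partial>\<^sub>\<beta>\<^sub>h\<^sup>2 F\<^sub>K\<close>.\<close>

lemma getc_setc [simp]: "getc c (setc c q u) = u"
  by (cases c; cases q) auto

lemma setc_setc [simp]: "setc c (setc c q u) w = setc c q w"
  by (cases c; cases q) auto

lemma setc_getc [simp]: "setc c q (getc c q) = q"
  by (cases c; cases q) auto

lemma getc_setc_other: "c \<noteq> c' \<Longrightarrow> getc c (setc c' q u) = getc c q"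
  by (cases c; cases c'; cases q) auto

lemma setc_setc_commute: "c \<noteq> c' \<Longrightarrow> setc c (setc c' q u) w = setc c' (setc c q w) u"
  by (cases c; cases c'; cases q) (auto simp: fun_upd_twist)

lemma setc_in_stem_space:
  "c \<in> coords t0 tau \<Longrightarrow> q \<in> stem_space t0 tau \<Longrightarrow> setc c q u \<in> stem_space t0 tau"
  by (cases c; cases q) (auto simp: coords_def stem_space_def)

lemma symd1_subset: "L \<subseteq> {1..tau} \<Longrightarrow> h \<in> {1..tau} \<Longrightarrow> symd1 L h \<subseteq> {1..tau}"
  by (auto simp: symd1_def)

lemma coords_CA: "s \<le> t0 \<Longrightarrow> CA s \<in> coords t0 tau"
  by (simp add: coords_def)

lemma coords_CB: "h \<in> {1..tau} \<Longrightarrow> CB h \<in> coords t0 tau"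
  by (simp add: coords_def)

lemma continuous_on_fun_upd:
  fixes Q :: "'b::topological_space \<Rightarrow> 'i \<Rightarrow> real"
  assumes "continuous_on S Q" "continuous_on S R"
  shows "continuous_on S (\<lambda>z. (Q z)(i := R z))"
proof (rule continuous_on_coordinatewise_then_product)
  fix j
  show "continuous_on S (\<lambda>z. ((Q z)(i := R z)) j)"
    using assms continuous_on_product_then_coordinatewise[OF assms(1), of j]
    by (cases "j = i") auto
qed

lemma continuous_on_setc:
  fixes Q :: "'b::topological_space \<Rightarrow> pt"
  assumes "continuous_on S Q" "continuous_on S R"
  shows "continuous_on S (\<lambda>z. setc c (Q z) (R z))"
proof -
  have "setc c q u = (case c of CA s \<Rightarrow> ((fst q)(s := u), snd q) | CB h \<Rightarrow> (fst q, (snd q)(h := u)))"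
    for q u by (cases c; cases q) auto
  then show ?thesis
    by (cases c) (simp_all add: assms continuous_on_Pair continuous_on_fun_upd
        continuous_on_fst continuous_on_snd)
qed

section \<open>Symmetry of second partial derivatives\<close>

lemma norm_diff_le_vector_derivative_bound:
  fixes f :: "real \<Rightarrow> 'a::real_normed_vector"
  assumes "\<And>z. z \<in> closed_segment a b \<Longrightarrow> (f has_vector_derivative f' z) (at z)"
    and "\<And>z. z \<in> closed_segment a b \<Longrightarrow> norm (f' z) \<le> B"
  shows "norm (f b - f a) \<le> B * \<bar>b - a\<bar>"
  using differentiable_bound[of "closed_segment a b" f "\<lambda>z h. h *\<^sub>R f' z" B b a] assms
  by (auto simp: has_vector_derivative_def onorm_scaleR_left onorm_id
      intro: has_derivative_at_withinI)

lemma mixed_difference_estimate: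
  fixes g gx gxy :: "real \<Rightarrow> real \<Rightarrow> 'a::real_normed_vector"
  assumes dx: "\<And>s z. \<bar>s - a\<bar> < r \<Longrightarrow> \<bar>z - b\<bar> < r \<Longrightarrow> ((\<lambda>s'. g s' z) has_vector_derivative gx s z) (at s)"
    and dxy: "\<And>s z. \<bar>s - a\<bar> < r \<Longrightarrow> \<bar>z - b\<bar> < r \<Longrightarrow> (gx s has_vector_derivative gxy s z) (at z)"
    and bound: "\<And>s z. \<bar>s - a\<bar> < r \<Longrightarrow> \<bar>z - b\<bar> < r \<Longrightarrow> norm (gxy s z - L) \<le> \<epsilon>"
    and x: "\<bar>x - a\<bar> < r" and y: "\<bar>y - b\<bar> < r"
  shows "norm (g x y - g a y - (g x b - g a b) - ((x - a) * (y - b)) *\<^sub>R L) \<le> \<epsilon> * \<bar>x - a\<bar> * \<bar>y - b\<bar>"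
proof -
  have in_box: "\<bar>z - c\<bar> < r" if "z \<in> closed_segment c w" "\<bar>w - c\<bar> < r" for z c w :: real
    using dist_in_closed_segment[OF that(1)] that(2) by (simp add: dist_real_def abs_minus_commute)
  have inner: "norm (gx s y - gx s b - (y - b) *\<^sub>R L) \<le> \<epsilon> * \<bar>y - b\<bar>" if s: "\<bar>s - a\<bar> < r" for s
  proof -
    have "norm ((gx s y - y *\<^sub>R L) - (gx s b - b *\<^sub>R L)) \<le> \<epsilon> * \<bar>y - b\<bar>"
      using y s by (intro norm_diff_le_vector_derivative_bound[where f' = "\<lambda>z. gxy s z - L"])
        (auto intro!: derivative_eq_intros dxy bound dest: in_box)
    then show ?thesis by (simp add: algebra_simps)
  qed
  have "norm ((g x y - g x b - ((x * (y - b)) *\<^sub>R L)) - (g a y - g a b - ((a * (y - b)) *\<^sub>R L)))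
      \<le> (\<epsilon> * \<bar>y - b\<bar>) * \<bar>x - a\<bar>"
    using x y
    by (intro norm_diff_le_vector_derivative_bound[where f' = "\<lambda>z. gx z y - gx z b - (y - b) *\<^sub>R L"])
      (auto intro!: derivative_eq_intros dx inner dest: in_box)
  then show ?thesis by (simp add: algebra_simps)
qed

lemma vector_derivative_linearization_bound:
  fixes h :: "real \<Rightarrow> 'a::real_normed_vector"
  assumes h: "(h has_vector_derivative d) (at b)"
    and lin: "\<forall>\<^sub>F y in at b. norm (h y - h b - (y - b) *\<^sub>R V) \<le> C * \<bar>y - b\<bar>"
  shows "norm (d - V) \<le> C"
proof (rule field_le_epsilon)
  fix \<eta> :: real assume "\<eta> > 0"
  have "\<forall>\<^sub>F y in at b. norm (h y - h b - (y - b) *\<^sub>R d) \<le> \<eta> * \<bar>y - b\<bar>"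
    using h \<open>\<eta> > 0\<close> by (simp add: has_vector_derivative_def has_derivative_within_alt2)
  then obtain y where "y \<noteq> b" and y: "norm (h y - h b - (y - b) *\<^sub>R V) \<le> C * \<bar>y - b\<bar>"
      "norm (h y - h b - (y - b) *\<^sub>R d) \<le> \<eta> * \<bar>y - b\<bar>"
    using eventually_happens'[OF at_neq_bot
        eventually_conj[OF eventually_neq_at_within eventually_conj[OF lin]]] by blast
  have "\<bar>y - b\<bar> * norm (d - V)
      = norm ((h y - h b - (y - b) *\<^sub>R V) - (h y - h b - (y - b) *\<^sub>R d))"
    by (simp add: algebra_simps flip: norm_scaleR)
  also have "\<dots> \<le> \<bar>y - b\<bar> * (C + \<eta>)"
    using norm_triangle_ineq4 y by (smt (verit) distrib_left mult.commute)
  finally show "norm (d - V) \<le> C + \<eta>"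
    using \<open>y \<noteq> b\<close> by simp
qed

lemma square_nbhd_continuous_on:
  fixes a b :: real and f :: "real \<times> real \<Rightarrow> 'a::metric_space"
  assumes "open S" "(a, b) \<in> S" and "continuous_on S f" and "\<epsilon> > 0"
  obtains r where "r > 0"
    "\<And>x y. \<bar>x - a\<bar> < r \<Longrightarrow> \<bar>y - b\<bar> < r \<Longrightarrow> (x, y) \<in> S \<and> dist (f (x, y)) (f (a, b)) < \<epsilon>"
proof -
  obtain d1 where "d1 > 0" and d1: "ball (a, b) d1 \<subseteq> S"
    using assms(1,2) open_contains_ball by blast
  have "isCont f (a, b)"
    using assms(1-3) continuous_on_eq_continuous_at by blast
  then obtain d2 where "d2 > 0" and d2: "\<And>z. dist z (a, b) < d2 \<Longrightarrow> dist (f z) (f (a, b)) < \<epsilon>"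
    using \<open>\<epsilon> > 0\<close> unfolding continuous_at_eps_delta by blast
  have "(x, y) \<in> S \<and> dist (f (x, y)) (f (a, b)) < \<epsilon>"
    if "\<bar>x - a\<bar> < min d1 d2 / 2" "\<bar>y - b\<bar> < min d1 d2 / 2" for x y
  proof -
    have "dist (x, y) (a, b) < min d1 d2"
      using norm_Pair_le[of "x - a" "y - b"] that by (simp add: dist_norm)
    then show ?thesis
      using d1 d2[of "(x, y)"] by (auto simp: dist_commute)
  qed
  then show ?thesis
    using that \<open>d1 > 0\<close> \<open>d2 > 0\<close> by (metis half_gt_zero min_less_iff_conj)
qed

lemma mixed_partials_commute:
  fixes g gx gy gxy :: "real \<Rightarrow> real \<Rightarrow> 'a::real_normed_vector"
  assumes S: "open S" "(a, b) \<in> S"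
    and dx: "\<And>x y. (x, y) \<in> S \<Longrightarrow> ((\<lambda>x'. g x' y) has_vector_derivative gx x y) (at x)"
    and dy: "\<And>x y. (x, y) \<in> S \<Longrightarrow> (g x has_vector_derivative gy x y) (at y)"
    and dxy: "\<And>x y. (x, y) \<in> S \<Longrightarrow> (gx x has_vector_derivative gxy x y) (at y)"
    and cont: "continuous_on S (\<lambda>(x, y). gxy x y)"
  shows "((\<lambda>x. gy x b) has_vector_derivative gxy a b) (at a)"
proof -
  have "\<exists>r>0. \<forall>x. norm (x - a) < r \<longrightarrow> norm (gy x b - gy a b - (x - a) *\<^sub>R gxy a b) \<le> \<epsilon> * norm (x - a)"
    if "\<epsilon> > 0" for \<epsilon>
  proof -
    obtain r where "r > 0" and r: "\<And>x y. \<bar>x - a\<bar> < r \<Longrightarrow> \<bar>y - b\<bar> < r \<Longrightarrow>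
        (x, y) \<in> S \<and> dist (gxy x y) (gxy a b) < \<epsilon>"
      using square_nbhd_continuous_on[OF S cont \<open>\<epsilon> > 0\<close>] by auto
    have "norm (gy x b - gy a b - (x - a) *\<^sub>R gxy a b) \<le> \<epsilon> * \<bar>x - a\<bar>" if x: "\<bar>x - a\<bar> < r" for x
      \<comment> \<open>divide the second difference of \<open>g\<close> by \<open>y - b\<close> and let \<open>y \<rightarrow> b\<close>\<close>
    proof (rule vector_derivative_linearization_bound)
      show "((\<lambda>y. g x y - g a y) has_vector_derivative gy x b - gy a b) (at b)"
        using r[OF x] r[of a b] \<open>r > 0\<close> by (intro derivative_intros dy) auto
      have "norm (g x y - g a y - (g x b - g a b) - ((x - a) * (y - b)) *\<^sub>R gxy a b)
          \<le> \<epsilon> * \<bar>x - a\<bar> * \<bar>y - b\<bar>" if y: "\<bar>y - b\<bar> < r" for y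
        by (rule mixed_difference_estimate[OF dx dxy _ x y])
          (use r in \<open>auto simp: dist_norm intro: less_imp_le\<close>)
      moreover have "\<forall>\<^sub>F y in at b. \<bar>y - b\<bar> < r"
        using \<open>r > 0\<close> by (auto simp: eventually_at dist_real_def intro!: exI[of _ r])
      ultimately show "\<forall>\<^sub>F y in at b. norm (g x y - g a y - (g x b - g a b) - (y - b) *\<^sub>R (x - a) *\<^sub>R gxy a b)
          \<le> \<epsilon> * \<bar>x - a\<bar> * \<bar>y - b\<bar>"
        by (auto simp: mult.commute elim: eventually_mono)
    qed
    then show ?thesis
      using \<open>r > 0\<close> by auto
  qed
  then show ?thesis
    by (simp add: has_vector_derivative_def has_derivative_at_alt bounded_linear_scaleR_left)
qed

lemma pd_works:
  "has_pd c f p \<Longrightarrow> ((\<lambda>u. f (setc c p u)) has_vector_derivative pd c f p) (at (getc c p))"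
  unfolding has_pd_def pd_def by (rule vector_derivative_works[THEN iffD1])

lemma pd_eqI:
  "((\<lambda>u. f (setc c p u)) has_vector_derivative d) (at (getc c p)) \<Longrightarrow> pd c f p = d"
  unfolding pd_def by (rule vector_derivative_at)

lemma C2_onD:
  assumes "C2_on t0 tau D f" "c \<in> coords t0 tau" "c' \<in> coords t0 tau" "q \<in> D"
  shows "has_pd c f q" "has_pd c' (pd c f) q" "continuous_on D (pd c' (pd c f))"
  using assms unfolding C2_on_def by blast+

definition coord_plane :: "coord \<Rightarrow> coord \<Rightarrow> pt \<Rightarrow> real \<times> real \<Rightarrow> pt" where
  "coord_plane c c' p z = setc c (setc c' p (snd z)) (fst z)"

lemma coord_plane_coords:
  assumes "c \<noteq> c'"
  shows "getc c (coord_plane c c' p (x, y)) = x" "getc c' (coord_plane c c' p (x, y)) = y"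
    "setc c (coord_plane c c' p (x, y)) u = coord_plane c c' p (u, y)"
    "setc c' (coord_plane c c' p (x, y)) u = coord_plane c c' p (x, u)"
  using assms by (simp_all add: coord_plane_def getc_setc_other setc_setc_commute)

lemma coord_plane_through:
  "coord_plane c c' p (getc c p, getc c' p) = p" "coord_plane c c' p (x, getc c' p) = setc c p x"
  by (simp_all add: coord_plane_def)

lemma continuous_on_coord_plane: "continuous_on S (coord_plane c c' p)"
  unfolding coord_plane_def by (intro continuous_on_setc continuous_intros)

lemma open_coord_plane_vimage:
  assumes "openin (top_of_set (stem_space t0 tau)) D" "p \<in> stem_space t0 tau"
    and "c \<in> coords t0 tau" "c' \<in> coords t0 tau"
  shows "open (coord_plane c c' p -` D)"
proof -
  obtain U where "open U" and D_eq: "D = stem_space t0 tau \<inter> U"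
    using assms(1) by (auto simp: openin_open)
  have "coord_plane c c' p z \<in> stem_space t0 tau" for z
    using assms(2-4) by (simp add: coord_plane_def setc_in_stem_space)
  then have "coord_plane c c' p -` D = coord_plane c c' p -` U"
    by (auto simp: D_eq)
  then show ?thesis
    using \<open>open U\<close> continuous_on_coord_plane by (simp add: open_vimage)
qed

lemma pd_commute:
  fixes f :: "pt \<Rightarrow> 'a::real_normed_vector"
  assumes D_sub: "D \<subseteq> stem_space t0 tau" and D_open: "openin (top_of_set (stem_space t0 tau)) D"
    and f: "C2_on t0 tau D f" and c: "c \<in> coords t0 tau" and c': "c' \<in> coords t0 tau" and p: "p \<in> D"
  shows "pd c (pd c' f) p = pd c' (pd c f) p"
proof (cases "c = c'")
  case False
  let ?\<Psi> = "coord_plane c c' p"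
  define S where "S = ?\<Psi> -` D"
  have "open S"
    unfolding S_def using D_open D_sub p c c' by (intro open_coord_plane_vimage) auto
  have "continuous_on S (pd c' (pd c f) \<circ> ?\<Psi>)"
    by (intro continuous_on_compose continuous_on_coord_plane
        continuous_on_subset[OF C2_onD(3)[OF f c c' p]]) (auto simp: S_def)
  then have cont: "continuous_on S (\<lambda>(x, y). pd c' (pd c f) (?\<Psi> (x, y)))"
    by (simp add: comp_def case_prod_unfold)
  have "((\<lambda>x. pd c' f (?\<Psi> (x, getc c' p))) has_vector_derivative
      pd c' (pd c f) (?\<Psi> (getc c p, getc c' p))) (at (getc c p))"
  proof (rule mixed_partials_commute[where g = "\<lambda>x y. f (?\<Psi> (x, y))" and gx = "\<lambda>x y. pd c f (?\<Psi> (x, y))"])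
    fix x y assume "(x, y) \<in> S"
    then have q: "?\<Psi> (x, y) \<in> D"
      by (simp add: S_def)
    show "((\<lambda>x'. f (?\<Psi> (x', y))) has_vector_derivative pd c f (?\<Psi> (x, y))) (at x)"
      using pd_works[OF C2_onD(1)[OF f c c' q]] by (simp add: coord_plane_coords[OF False])
    show "((\<lambda>y'. f (?\<Psi> (x, y'))) has_vector_derivative pd c' f (?\<Psi> (x, y))) (at y)"
      using pd_works[OF C2_onD(1)[OF f c' c q]] by (simp add: coord_plane_coords[OF False])
    show "((\<lambda>y'. pd c f (?\<Psi> (x, y'))) has_vector_derivative pd c' (pd c f) (?\<Psi> (x, y))) (at y)"
      using pd_works[OF C2_onD(2)[OF f c c' q]] by (simp add: coord_plane_coords[OF False])
  qed (use \<open>open S\<close> cont p in \<open>auto simp: S_def coord_plane_through\<close>)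
  then show ?thesis
    by (intro pd_eqI) (simp add: coord_plane_through)
qed simp

section \<open>The operators as linear forms in the partial derivatives\<close>

text \<open>The operators applied to a table \<open>d c L\<close> of values \<open>\<partial>\<^sub>c F\<^sub>L(p)\<close>: \<open>dbaru_lin\<close> is
  \<open>dbaru\<close>, \<open>dbeta_lin\<close> is the \<open>\<beta>\<close>-part, and \<open>dTu_lin\<close> is \<open>dbarT\<close> for \<open>u = 1\<close> and \<open>dT\<close>
  for \<open>u = 0\<close>. As \<open>\<partial>\<^sub>c\<close> commutes with them, on the table of second derivatives
  \<open>\<partial>\<^sub>c \<partial>\<^sub>c\<^sub>' F\<^sub>L(p)\<close> they compute the composites.\<close>

definition dbaru_lin :: "(nat \<Rightarrow> 'a::real_normed_algebra_1) \<Rightarrow> nat \<Rightarrow> nat \<Rightarrow> (coord \<Rightarrow> 'a) \<Rightarrow> 'a" where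
  "dbaru_lin v t0 u d = d (CA 0) - ((-1::real) ^ u) *\<^sub>R (\<Sum>s=1..t0. v s * d (CA s))"

definition dbeta_lin :: "nat \<Rightarrow> nat \<Rightarrow> (coord \<Rightarrow> nat set \<Rightarrow> 'a::real_vector) \<Rightarrow> nat set \<Rightarrow> 'a" where
  "dbeta_lin tau u d K = (\<Sum>h=1..tau. ((-1::real) ^ (sgm h K + u)) *\<^sub>R d (CB h) (symd1 K h))"

definition dTu_lin :: "(nat \<Rightarrow> 'a::real_normed_algebra_1) \<Rightarrow> nat \<Rightarrow> nat \<Rightarrow> nat \<Rightarrow>
    (coord \<Rightarrow> nat set \<Rightarrow> 'a) \<Rightarrow> nat set \<Rightarrow> 'a" where
  "dTu_lin v t0 tau u d K = dbaru_lin v t0 (card K + u) (\<lambda>c. d c K) + dbeta_lin tau u d K"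

lemma dA_eq_lin: "dA v t0 f = (\<lambda>p. dbaru_lin v t0 0 (\<lambda>c. pd c f p))"
  by (simp add: fun_eq_iff dA_def dbaru_lin_def)

lemma dbarA_eq_lin: "dbarA v t0 f = (\<lambda>p. dbaru_lin v t0 1 (\<lambda>c. pd c f p))"
  by (simp add: fun_eq_iff dbarA_def dbaru_lin_def)

lemma dT_eq_lin: "dT v t0 tau F K = (\<lambda>p. dTu_lin v t0 tau 0 (\<lambda>c L. pd c (F L) p) K)"
  by (simp add: fun_eq_iff dT_def dTu_lin_def dbaru_def dbaru_lin_def dbeta_lin_def)

lemma dbarT_eq_lin: "dbarT v t0 tau F K = (\<lambda>p. dTu_lin v t0 tau 1 (\<lambda>c L. pd c (F L) p) K)"
  by (simp add: fun_eq_iff dbarT_def dTu_lin_def dbaru_def dbaru_lin_def dbeta_lin_def)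

lemma dbaru_lin_cong:
  "(\<And>s. s \<le> t0 \<Longrightarrow> d (CA s) = d' (CA s)) \<Longrightarrow> dbaru_lin v t0 u d = dbaru_lin v t0 u d'"
  by (simp add: dbaru_lin_def)

lemma dbeta_lin_cong:
  "(\<And>h. h \<in> {1..tau} \<Longrightarrow> d (CB h) (symd1 K h) = d' (CB h) (symd1 K h))
    \<Longrightarrow> dbeta_lin tau u d K = dbeta_lin tau u d' K"
  by (simp add: dbeta_lin_def)

lemma dTu_lin_cong:
  assumes "K \<subseteq> {1..tau}"
    and "\<And>c L. c \<in> coords t0 tau \<Longrightarrow> L \<subseteq> {1..tau} \<Longrightarrow> d c L = d' c L"
  shows "dTu_lin v t0 tau u d K = dTu_lin v t0 tau u d' K"
  unfolding dTu_lin_def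
  by (intro arg_cong2[where f = "(+)"] dbaru_lin_cong dbeta_lin_cong)
    (rule assms(2); (rule coords_CA coords_CB symd1_subset assms(1) | assumption)+)+

lemma has_vector_derivative_dbaru_lin:
  assumes "\<And>s. s \<le> t0 \<Longrightarrow> ((\<lambda>x. d x (CA s)) has_vector_derivative d' (CA s)) (at z)"
  shows "((\<lambda>x. dbaru_lin v t0 u (d x)) has_vector_derivative dbaru_lin v t0 u d') (at z)"
  unfolding dbaru_lin_def using assms by (auto intro!: derivative_eq_intros)

lemma has_vector_derivative_dbeta_lin:
  assumes "\<And>h. h \<in> {1..tau} \<Longrightarrow>
      ((\<lambda>x. d x (CB h) (symd1 K h)) has_vector_derivative d' (CB h) (symd1 K h)) (at z)"
  shows "((\<lambda>x. dbeta_lin tau u (d x) K) has_vector_derivative dbeta_lin tau u d' K) (at z)"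
  unfolding dbeta_lin_def using assms by (auto intro!: derivative_eq_intros)

lemma pd_dbaru_lin:
  assumes "\<And>s. s \<le> t0 \<Longrightarrow> has_pd c (pd (CA s) f) p"
  shows "pd c (\<lambda>q. dbaru_lin v t0 u (\<lambda>c'. pd c' f q)) p = dbaru_lin v t0 u (\<lambda>c'. pd c (pd c' f) p)"
  using assms by (intro pd_eqI has_vector_derivative_dbaru_lin pd_works)

lemma pd_dTu_lin:
  assumes "\<And>c' M. c' \<in> coords t0 tau \<Longrightarrow> M \<subseteq> {1..tau} \<Longrightarrow> has_pd c (pd c' (F M)) p"
    and "K \<subseteq> {1..tau}"
  shows "pd c (\<lambda>q. dTu_lin v t0 tau u (\<lambda>c' M. pd c' (F M) q) K) p
    = dTu_lin v t0 tau u (\<lambda>c' M. pd c (pd c' (F M)) p) K"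
  unfolding dTu_lin_def using assms
  by (intro pd_eqI derivative_intros has_vector_derivative_dbaru_lin has_vector_derivative_dbeta_lin pd_works
      assms coords_CA coords_CB symd1_subset) auto

lemma LapT_eq_lin:
  assumes "\<And>c c'. c \<in> coords t0 tau \<Longrightarrow> c' \<in> coords t0 tau \<Longrightarrow> has_pd c (pd c' (F K)) p"
  shows "LapT v t0 tau F K p = dbaru_lin v t0 0 (\<lambda>c. dbaru_lin v t0 1 (\<lambda>c'. pd c (pd c' (F K)) p))
    + (\<Sum>h=1..tau. pd (CB h) (pd (CB h) (F K)) p)"
  unfolding LapT_def dA_eq_lin dbarA_eq_lin
  by (intro arg_cong2[where f = "(+)"] dbaru_lin_cong pd_dbaru_lin assms coords_CA refl)

lemma dTu_lin_pd_dTu_lin: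
  assumes "\<And>c c' M. c \<in> coords t0 tau \<Longrightarrow> c' \<in> coords t0 tau \<Longrightarrow> M \<subseteq> {1..tau} \<Longrightarrow> has_pd c (pd c' (F M)) p"
    and "K \<subseteq> {1..tau}"
  shows "dTu_lin v t0 tau u' (\<lambda>c L. pd c (\<lambda>q. dTu_lin v t0 tau u (\<lambda>c' M. pd c' (F M) q) L) p) K
    = dTu_lin v t0 tau u' (\<lambda>c L. dTu_lin v t0 tau u (\<lambda>c' M. pd c (pd c' (F M)) p) L) K"
  using assms by (intro dTu_lin_cong pd_dTu_lin) auto

section \<open>The signs \<open>\<sigma>(h, K)\<close>\<close>

lemma symd1_commute: "symd1 (symd1 K h) j = symd1 (symd1 K j) h"
  by (auto simp: symd1_def)

lemma symd1_symd1 [simp]: "symd1 (symd1 K h) h = K"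
  by (auto simp: symd1_def)

lemma card_symd1_sign:
  assumes "finite K"
  shows "(-1::real) ^ card (symd1 K h) = - ((-1) ^ card K)"
proof (cases "h \<in> K")
  case True
  then have "card K = Suc (card (symd1 K h))"
    using assms unfolding symd1_def by (simp only: if_True card_Suc_Diff1)
  then show ?thesis
    by simp
qed (use assms in \<open>simp add: symd1_def\<close>)

lemma sgm_sign: "(-1::real) ^ sgm h K = (-1) ^ card {k \<in> K. k \<le> h}"
  by (simp add: sgm_def minus_one_power_iff)

lemma sgm_symd1_sign_le:
  assumes "finite K" "h \<le> j"
  shows "(-1::real) ^ sgm j (symd1 K h) = - ((-1) ^ sgm j K)"
proof -
  have "{k \<in> symd1 K h. k \<le> j} = symd1 {k \<in> K. k \<le> j} h"
    using assms(2) by (auto simp: symd1_def)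
  then show ?thesis
    using card_symd1_sign[of "{k \<in> K. k \<le> j}" h] assms(1) by (simp add: sgm_sign)
qed

lemma sgm_symd1_less: "j < h \<Longrightarrow> sgm j (symd1 K h) = sgm j K"
  by (auto simp: sgm_def symd1_def intro!: arg_cong[where f = "\<lambda>A. card A mod 2"])

lemma sgm_symd1_swap:
  assumes "finite K" "h \<noteq> j"
  shows "(-1::real) ^ (sgm j K + sgm h (symd1 K j)) = - ((-1) ^ (sgm h K + sgm j (symd1 K h)))"
  using assms
  by (cases "h < j")
    (simp_all add: power_add sgm_symd1_less sgm_symd1_sign_le[OF assms(1)])

lemma sgm_symd1_diag:
  assumes "finite K"
  shows "(-1::real) ^ (sgm h K + sgm h (symd1 K h)) = -1"
proof -
  have "(-1::real) ^ (sgm h K + sgm h (symd1 K h)) = (-1) ^ sgm h K * - ((-1) ^ sgm h K)"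
    by (simp add: power_add sgm_symd1_sign_le[OF assms])
  then show ?thesis
    by (simp add: minus_one_power_iff)
qed

section \<open>Composites of the linear forms\<close>

lemma sum_sum_antisym_offdiag:
  fixes r :: "'i \<Rightarrow> 'i \<Rightarrow> 'a::real_vector"
  assumes "finite I" and antisym: "\<And>h j. h \<in> I \<Longrightarrow> j \<in> I \<Longrightarrow> h \<noteq> j \<Longrightarrow> r j h = - r h j"
  shows "(\<Sum>h\<in>I. \<Sum>j\<in>I. r h j) = (\<Sum>h\<in>I. r h h)"
proof -
  have "2 *\<^sub>R (\<Sum>h\<in>I. \<Sum>j\<in>I. r h j) = (\<Sum>h\<in>I. \<Sum>j\<in>I. r h j) + (\<Sum>j\<in>I. \<Sum>h\<in>I. r h j)"
    by (simp add: scaleR_2 sum.swap[of r I I])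
  also have "\<dots> = (\<Sum>h\<in>I. \<Sum>j\<in>I. r h j + r j h)"
    by (simp add: sum.distrib)
  also have "\<dots> = (\<Sum>h\<in>I. \<Sum>j\<in>I. if j = h then 2 *\<^sub>R r h h else 0)"
  proof (intro sum.cong refl)
    fix h j assume "h \<in> I" "j \<in> I"
    then show "r h j + r j h = (if j = h then 2 *\<^sub>R r h h else 0)"
      using antisym[of h j] by (cases "j = h") (simp_all add: scaleR_2)
  qed
  also have "\<dots> = 2 *\<^sub>R (\<Sum>h\<in>I. r h h)"
    using assms(1) by (simp add: scaleR_sum_right)
  finally show ?thesis
    by simp
qed

lemma dbaru_lin_add: "dbaru_lin v t0 u (\<lambda>c. d c + d' c) = dbaru_lin v t0 u d + dbaru_lin v t0 u d'"
  by (simp add: dbaru_lin_def distrib_left sum.distrib scaleR_add_right)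

lemma dbeta_lin_add:
  "dbeta_lin tau u (\<lambda>c L. d c L + d' c L) K = dbeta_lin tau u d K + dbeta_lin tau u d' K"
  by (simp add: dbeta_lin_def sum.distrib scaleR_add_right)

lemma dbaru_lin_sign: "(-1::real) ^ u = (-1) ^ u' \<Longrightarrow> dbaru_lin v t0 u = dbaru_lin v t0 u'"
  by (simp add: fun_eq_iff dbaru_lin_def)

lemma dbeta_lin_odd: "odd (u + u') \<Longrightarrow> dbeta_lin tau u' d K = - dbeta_lin tau u d K"
  by (auto simp: dbeta_lin_def power_add minus_one_power_iff simp flip: sum_negf)

lemma dbaru_lin_dbeta_lin_commute:
  "dbaru_lin v t0 a (\<lambda>c. dbeta_lin tau u (X c) K)
    = dbeta_lin tau u (\<lambda>c L. dbaru_lin v t0 a (\<lambda>c'. X c' c L)) K"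
  by (simp add: dbaru_lin_def dbeta_lin_def scaleR_sum_right sum_distrib_left sum_subtractf
      scaleR_diff_right ac_simps)
    (rule sum.swap)

lemma dbaru_lin_dbaru_lin:
  assumes "odd (u + u')" and sym: "\<And>s. s \<le> t0 \<Longrightarrow> X (CA s) (CA 0) = X (CA 0) (CA s)"
  shows "dbaru_lin v t0 u' (\<lambda>c. dbaru_lin v t0 u (X c))
    = X (CA 0) (CA 0) - (\<Sum>s=1..t0. v s * (\<Sum>r=1..t0. v r * X (CA s) (CA r)))"
proof -
  define e where "e = (-1::real) ^ u"
  have e: "(-1::real) ^ u' = - e" "e * e = 1"
    using assms(1) by (auto simp: e_def minus_one_power_iff)
  define R where "R s = (\<Sum>r=1..t0. v r * X (CA s) (CA r))" for s
  define A where "A = (\<Sum>s=1..t0. v s * X (CA 0) (CA s))"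
  define Q where "Q = (\<Sum>s=1..t0. v s * R s)"
  have "v s * dbaru_lin v t0 u (X (CA s)) = v s * X (CA s) (CA 0) - e *\<^sub>R (v s * R s)" for s
    by (simp add: dbaru_lin_def e_def R_def right_diff_distrib)
  then have "(\<Sum>s=1..t0. v s * dbaru_lin v t0 u (X (CA s))) = (\<Sum>s=1..t0. v s * X (CA s) (CA 0)) - e *\<^sub>R Q"
    by (simp add: Q_def sum_subtractf scaleR_sum_right)
  also have "(\<Sum>s=1..t0. v s * X (CA s) (CA 0)) = A"
    using sym by (auto simp: A_def intro: sum.cong)
  finally have "dbaru_lin v t0 u' (\<lambda>c. dbaru_lin v t0 u (X c)) = (X (CA 0) (CA 0) - e *\<^sub>R A) + e *\<^sub>R (A - e *\<^sub>R Q)"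
    by (simp add: dbaru_lin_def e A_def e_def[symmetric])
  also have "\<dots> = X (CA 0) (CA 0) - Q"
    by (simp add: algebra_simps e(2))
  finally show ?thesis
    by (simp add: Q_def R_def)
qed

lemma dbaru_lin_dbeta_lin_cancel:
  assumes K: "K \<subseteq> {1..tau}" and odd: "odd (u + u')"
    and sym: "\<And>s h L. s \<le> t0 \<Longrightarrow> h \<in> {1..tau} \<Longrightarrow> L \<subseteq> {1..tau} \<Longrightarrow> X (CB h) (CA s) L = X (CA s) (CB h) L"
  shows "dbaru_lin v t0 (card K + u') (\<lambda>c. dbeta_lin tau u (X c) K)
      + dbeta_lin tau u' (\<lambda>c L. dbaru_lin v t0 (card L + u) (\<lambda>c'. X c c' L)) K = 0"
proof -
  have fin: "finite K"
    using K finite_subset by blast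
  have "dbeta_lin tau u' (\<lambda>c L. dbaru_lin v t0 (card L + u) (\<lambda>c'. X c c' L)) K
      = dbeta_lin tau u' (\<lambda>c L. dbaru_lin v t0 (card K + u') (\<lambda>c'. X c' c L)) K"
  proof (rule dbeta_lin_cong)
    fix h assume h: "h \<in> {1..tau}"
    have "(-1::real) ^ (card (symd1 K h) + u) = (-1) ^ (card K + u')"
      using card_symd1_sign[OF fin, of h] odd by (auto simp: power_add minus_one_power_iff)
    then have sign: "dbaru_lin v t0 (card (symd1 K h) + u) = dbaru_lin v t0 (card K + u')"
      by (rule dbaru_lin_sign)
    show "dbaru_lin v t0 (card (symd1 K h) + u) (\<lambda>c'. X (CB h) c' (symd1 K h))
        = dbaru_lin v t0 (card K + u') (\<lambda>c'. X c' (CB h) (symd1 K h))"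
      unfolding sign by (intro dbaru_lin_cong sym h symd1_subset[OF K h])
  qed
  also have "\<dots> = - dbeta_lin tau u (\<lambda>c L. dbaru_lin v t0 (card K + u') (\<lambda>c'. X c' c L)) K"
    using odd by (rule dbeta_lin_odd)
  also have "\<dots> = - dbaru_lin v t0 (card K + u') (\<lambda>c. dbeta_lin tau u (X c) K)"
    by (simp add: dbaru_lin_dbeta_lin_commute)
  finally show ?thesis
    by simp
qed

lemma dbeta_lin_dbeta_lin:
  assumes K: "K \<subseteq> {1..tau}" and odd: "odd (u + u')"
    and sym: "\<And>h j L. h \<in> {1..tau} \<Longrightarrow> j \<in> {1..tau} \<Longrightarrow> L \<subseteq> {1..tau} \<Longrightarrow> X (CB h) (CB j) L = X (CB j) (CB h) L"
  shows "dbeta_lin tau u' (\<lambda>c L. dbeta_lin tau u (X c) L) K = (\<Sum>h=1..tau. X (CB h) (CB h) K)"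
proof -
  have fin: "finite K"
    using K finite_subset by blast
  define r where "r h j = (-1::real) ^ (sgm h K + sgm j (symd1 K h)) *\<^sub>R X (CB h) (CB j) (symd1 (symd1 K h) j)"
    for h j
  have "dbeta_lin tau u' (\<lambda>c L. dbeta_lin tau u (X c) L) K = (\<Sum>h=1..tau. \<Sum>j=1..tau. - r h j)"
    unfolding dbeta_lin_def scaleR_sum_right
    using odd by (intro sum.cong refl) (auto simp: r_def power_add minus_one_power_iff)
  also have "\<dots> = - (\<Sum>h=1..tau. \<Sum>j=1..tau. r h j)"
    by (simp add: sum_negf)
  also have "(\<Sum>h=1..tau. \<Sum>j=1..tau. r h j) = (\<Sum>h=1..tau. r h h)"
  proof (rule sum_sum_antisym_offdiag)
    fix h j assume hj: "h \<in> {1..tau}" "j \<in> {1..tau}" "h \<noteq> j"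
    have "X (CB j) (CB h) (symd1 (symd1 K j) h) = X (CB h) (CB j) (symd1 (symd1 K h) j)"
      using sym[OF hj(2,1) symd1_subset[OF symd1_subset[OF K hj(1)] hj(2)]] by (simp add: symd1_commute)
    then show "r j h = - r h j"
      using sgm_symd1_swap[OF fin hj(3)] by (simp add: r_def)
  qed simp
  also have "\<dots> = - (\<Sum>h=1..tau. X (CB h) (CB h) K)"
    by (simp add: r_def sgm_symd1_diag[OF fin] flip: sum_negf)
  finally show ?thesis
    by simp
qed

lemma dTu_lin_dTu_lin:
  assumes K: "K \<subseteq> {1..tau}" and odd: "odd (u + u')"
    and sym: "\<And>c c' L. c \<in> coords t0 tau \<Longrightarrow> c' \<in> coords t0 tau \<Longrightarrow> L \<subseteq> {1..tau} \<Longrightarrow> X c c' L = X c' c L"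
  shows "dTu_lin v t0 tau u' (\<lambda>c L. dTu_lin v t0 tau u (X c) L) K
    = dbaru_lin v t0 0 (\<lambda>c. dbaru_lin v t0 1 (\<lambda>c'. X c c' K)) + (\<Sum>h=1..tau. X (CB h) (CB h) K)"
proof -
  have "dTu_lin v t0 tau u' (\<lambda>c L. dTu_lin v t0 tau u (X c) L) K
      = dbaru_lin v t0 (card K + u') (\<lambda>c. dbaru_lin v t0 (card K + u) (\<lambda>c'. X c c' K))
        + (dbaru_lin v t0 (card K + u') (\<lambda>c. dbeta_lin tau u (X c) K)
          + dbeta_lin tau u' (\<lambda>c L. dbaru_lin v t0 (card L + u) (\<lambda>c'. X c c' L)) K)
        + dbeta_lin tau u' (\<lambda>c L. dbeta_lin tau u (X c) L) K"
    by (simp add: dTu_lin_def dbaru_lin_add dbeta_lin_add ac_simps)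
  also have "dbaru_lin v t0 (card K + u') (\<lambda>c. dbaru_lin v t0 (card K + u) (\<lambda>c'. X c c' K))
      = dbaru_lin v t0 0 (\<lambda>c. dbaru_lin v t0 1 (\<lambda>c'. X c c' K))"
    using odd sym[OF coords_CA coords_CA K]
    by (simp add: dbaru_lin_dbaru_lin[where X = "\<lambda>c c'. X c c' K"])
  also have "dbaru_lin v t0 (card K + u') (\<lambda>c. dbeta_lin tau u (X c) K)
      + dbeta_lin tau u' (\<lambda>c L. dbaru_lin v t0 (card L + u) (\<lambda>c'. X c c' L)) K = 0"
    using K odd sym[OF coords_CB coords_CA] by (rule dbaru_lin_dbeta_lin_cancel)
  also have "dbeta_lin tau u' (\<lambda>c L. dbeta_lin tau u (X c) L) K = (\<Sum>h=1..tau. X (CB h) (CB h) K)"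
    using K odd sym[OF coords_CB coords_CB] by (rule dbeta_lin_dbeta_lin)
  finally show ?thesis
    by simp
qed

theorem lemma3p5:
  fixes v :: "nat \<Rightarrow> 'a::real_normed_algebra_1"
    and cj :: "'a \<Rightarrow> 'a"
    and N tau :: nat and t :: "nat \<Rightarrow> nat"
    and D :: "pt set"
    and F :: "nat set \<Rightarrow> pt \<Rightarrow> 'a"
  assumes fin_dim: "\<exists>B::'a set. finite B \<and> span B = UNIV"
    and inv_linear: "linear cj"
    and inv_mult: "\<And>x y. cj (x * y) = cj y * cj x"
    and inv_inv: "\<And>x. cj (cj x) = x"
    and v0: "v 0 = 1"
    and v_sq: "\<And>s. 1 \<le> s \<Longrightarrow> s \<le> N \<Longrightarrow> v s * v s = - 1"
    and v_anti: "\<And>r s. 1 \<le> r \<Longrightarrow> r \<le> N \<Longrightarrow> 1 \<le> s \<Longrightarrow> s \<le> N \<Longrightarrow> r \<noteq> s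
                   \<Longrightarrow> v r * v s = - (v s * v r)"
    and v_basis: "inj_on v {0..N}" "independent (v ` {0..N})"
    and T_mono: "strict_mono_on {0..tau} t"
    and T_last: "t tau = N"
    and D_sub: "D \<subseteq> stem_space (t 0) tau"
    and D_open: "openin (top_of_set (stem_space (t 0) tau)) D"
    and D_inv: "\<And>x b h. (x, b) \<in> D \<Longrightarrow> h \<in> {1..tau} \<Longrightarrow> (x, b(h := - b h)) \<in> D"
    and F_stem: "stem2 (t 0) tau D F"
  shows "\<forall>K. K \<subseteq> {1..tau} \<longrightarrow> (\<forall>p\<in>D.
           LapT v (t 0) tau F K p = dT v (t 0) tau (dbarT v (t 0) tau F) K p \<and>
           LapT v (t 0) tau F K p = dbarT v (t 0) tau (dT v (t 0) tau F) K p)"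
proof (intro allI impI ballI)
  fix K p assume K: "K \<subseteq> {1..tau}" and p: "p \<in> D"
  have C2: "C2_on (t 0) tau D (F M)" if "M \<subseteq> {1..tau}" for M
    using F_stem that by (simp add: stem2_def)
  have has_pd2: "has_pd c (pd c' (F M)) p"
    if "c \<in> coords (t 0) tau" "c' \<in> coords (t 0) tau" "M \<subseteq> {1..tau}" for c c' M
    using C2_onD(2)[OF C2[OF that(3)] that(2,1) p] .
  have sym: "pd c (pd c' (F M)) p = pd c' (pd c (F M)) p"
    if "c \<in> coords (t 0) tau" "c' \<in> coords (t 0) tau" "M \<subseteq> {1..tau}" for c c' M
    using pd_commute[OF D_sub D_open C2[OF that(3)] that(1,2) p] .
  have "LapT v (t 0) tau F K p = dbaru_lin v (t 0) 0 (\<lambda>c. dbaru_lin v (t 0) 1 (\<lambda>c'. pd c (pd c' (F K)) p))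
      + (\<Sum>h=1..tau. pd (CB h) (pd (CB h) (F K)) p)"
    using has_pd2 K by (intro LapT_eq_lin)
  moreover have "dT v (t 0) tau (dbarT v (t 0) tau F) K p
      = dTu_lin v (t 0) tau 0 (\<lambda>c L. dTu_lin v (t 0) tau 1 (\<lambda>c' M. pd c (pd c' (F M)) p) L) K"
    unfolding dT_eq_lin dbarT_eq_lin using has_pd2 K by (rule dTu_lin_pd_dTu_lin)
  moreover have "dbarT v (t 0) tau (dT v (t 0) tau F) K p
      = dTu_lin v (t 0) tau 1 (\<lambda>c L. dTu_lin v (t 0) tau 0 (\<lambda>c' M. pd c (pd c' (F M)) p) L) K"
    unfolding dT_eq_lin dbarT_eq_lin using has_pd2 K by (rule dTu_lin_pd_dTu_lin)
  ultimately show "LapT v (t 0) tau F K p = dT v (t 0) tau (dbarT v (t 0) tau F) K p \<and>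
      LapT v (t 0) tau F K p = dbarT v (t 0) tau (dT v (t 0) tau F) K p"
    using dTu_lin_dTu_lin[OF K _ sym] by simp
qed

end
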